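(* Let $A_o,A_i\in\mathbb R^{n_y\times n_x}$, let $B_o,B_i\in\mathbb R^{n_y\times n_y}$ and $C_o,C_i\in\mathbb R^{n_x\times n_x}$ be invertible, and let $W_o=(\det(B_oB_o^T))^{1/(2n_y)}\|C_o\|_{\mathrm F}$ and $W_i=(\det(B_iB_i^T))^{1/(2n_y)}\|C_i\|_{\mathrm F}$ be the generalized cone widths of the inclusions $y\in\{(A_o+B_o\Delta C_o)x:\|\Delta\|\le1\}$ and $y\in\{(A_i+B_i\Delta C_i)x:\|\Delta\|\le1\}$. If the first (outer) inclusion contains the second (inner) inclusion, then $W_o\ge W_i$.
   Context: $\|\cdot\|$ is the spectral norm, $\|\cdot\|_{\mathrm F}$ the Frobenius norm. An inclusion contains another if every pair $(x,y)\in\mathbb C^{n_x}\times\mathbb C^{n_y}$ satisfying the second also satisfies the first. The generalized cone width formula equals $\sqrt{\mathrm E(R^2(x))}$ with $x$ standard complex normal and $R(x)=\sqrt{x^*C^TCx}\,(\det(BB^T))^{1/(2n_y)}$. *)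

theory Defs
  imports "HOL-Analysis.Analysis"
begin

definition cmat :: "real^'n^'m \<Rightarrow> complex^'n^'m" where
  "cmat A = (\<chi> i j. complex_of_real (A $ i $ j))"

definition spectral_norm :: "complex^'n^'m \<Rightarrow> real" where
  "spectral_norm D = onorm (\<lambda>v. D *v v)"

definition frob_norm :: "real^'n^'m \<Rightarrow> real" where
  "frob_norm C = sqrt (\<Sum>i\<in>UNIV. \<Sum>j\<in>UNIV. (C $ i $ j)^2)"

definition inclusion ::
  "real^'nx^'ny \<Rightarrow> real^'ny^'ny \<Rightarrow> real^'nx^'nx \<Rightarrow> complex^'nx \<Rightarrow> complex^'ny \<Rightarrow> bool" where
  "inclusion A B C x y \<longleftrightarrow>
     (\<exists>D :: complex^'nx^'ny. spectral_norm D \<le> 1 \<and>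
        y = (cmat A + cmat B ** D ** cmat C) *v x)"

definition cone_width :: "real^'ny^'ny \<Rightarrow> real^'nx^'nx \<Rightarrow> real" where
  "cone_width B C = det (B ** transpose B) powr (1 / (2 * real CARD('ny))) * frob_norm C"

end

theory Submission
  imports Defs
begin

text \<open>
  Fix a real \<open>x\<close>. Using a rank-one contraction for \<open>\<Delta>\<close>, the inner inclusion
  contains every \<open>Ai x + Bi u\<close> with \<open>\<parallel>u\<parallel> \<le> \<parallel>Ci x\<parallel>\<close>, and taking real parts shows that
  each of these points equals \<open>Ao x + Bo z\<close> with \<open>\<parallel>z\<parallel> \<le> \<parallel>Co x\<parallel>\<close>. So the map
  \<open>Bo\<^sup>-\<^sup>1 Bi\<close> sends the ball of radius \<open>\<parallel>Ci x\<parallel>\<close> into a translate of the ball of radius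
  \<open>\<parallel>Co x\<parallel>\<close>, hence (by central symmetry) into that ball itself, and Hadamard's inequality gives
  \<open>\<bar>det Bi\<bar> \<parallel>Ci x\<parallel>\<^sup>n \<le> \<bar>det Bo\<bar> \<parallel>Co x\<parallel>\<^sup>n\<close>. Taking \<open>n\<close>-th roots at the unit vectors
  \<open>x = e\<^sub>j\<close> compares the columns of \<open>Ci\<close> and \<open>Co\<close> weighted by the determinant factors,
  and summing their squares compares the cone widths.
\<close>

lemma orthogonalize_row:
  fixes A :: "real^'n^'n"
  assumes "k \<notin> S"
  obtains A' where "det A' = det A" "norm (row k A') \<le> norm (row k A)"
    "\<And>i. i \<in> S \<Longrightarrow> orthogonal (row k A') (row i A)"
    "\<And>i. i \<noteq> k \<Longrightarrow> row i A' = row i A"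
proof -
  obtain y z where y: "y \<in> span {row i A | i. i \<in> S}"
    and z: "\<And>w. w \<in> span {row i A | i. i \<in> S} \<Longrightarrow> orthogonal z w"
    and yz: "row k A = y + z"
    using orthogonal_subspace_decomp_exists[of "{row i A | i. i \<in> S}" "row k A"] by blast
  define A' where "A' = (\<chi> i. if i = k then row k A + (- y) else row i A)"
  have "- y \<in> vec.span {row j A | j. j \<noteq> k}"
  proof -
    have "span {row i A | i. i \<in> S} \<subseteq> span {row j A | j. j \<noteq> k}"
      using \<open>k \<notin> S\<close> by (intro span_mono) blast
    then show ?thesis
      using y by (auto simp: span_vec_eq intro!: span_neg)
  qed
  then have "det A' = det A"
    unfolding A'_def by (rule det_row_span)
  moreover have "row k A' = z"
    using yz by (simp add: A'_def row_def vec_eq_iff)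
  moreover have "norm z \<le> norm (row k A)"
  proof -
    have "orthogonal y z"
      using z[OF y] by (simp add: orthogonal_commute)
    then have "(norm (row k A))\<^sup>2 = (norm y)\<^sup>2 + (norm z)\<^sup>2"
      unfolding yz by (rule norm_add_Pythagorean)
    then have "(norm z)\<^sup>2 \<le> (norm (row k A))\<^sup>2"
      by simp
    then show ?thesis
      by (rule power2_le_imp_le) simp
  qed
  moreover have "orthogonal z (row i A)" if "i \<in> S" for i
    using that by (blast intro: z span_base)
  moreover have "row i A' = row i A" if "i \<noteq> k" for i
    using that by (simp add: A'_def row_def vec_eq_iff)
  ultimately show ?thesis
    by (intro that[of A']) auto
qed

lemma orthogonalize_rows:
  fixes A :: "real^'n^'n"
  obtains A' where "det A' = det A" "\<And>i. norm (row i A') \<le> norm (row i A)"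
    "pairwise (\<lambda>i j. orthogonal (row i A') (row j A')) UNIV"
proof -
  have "\<exists>A'. det A' = det A \<and> (\<forall>i. norm (row i A') \<le> norm (row i A))
          \<and> pairwise (\<lambda>i j. orthogonal (row i A') (row j A')) S"
    if "finite S" for S :: "'n set"
    using that
  proof (induction S rule: finite_induct)
    case empty
    show ?case
      by (intro exI[of _ A]) simp
  next
    case (insert k S)
    then obtain A1 where A1: "det A1 = det A" "\<And>i. norm (row i A1) \<le> norm (row i A)"
      "pairwise (\<lambda>i j. orthogonal (row i A1) (row j A1)) S"
      by blast
    obtain A2 where A2: "det A2 = det A1" "norm (row k A2) \<le> norm (row k A1)"
      "\<And>i. i \<in> S \<Longrightarrow> orthogonal (row k A2) (row i A1)"
      "\<And>i. i \<noteq> k \<Longrightarrow> row i A2 = row i A1"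
      using orthogonalize_row[where A = A1, OF \<open>k \<notin> S\<close>] by blast
    have "norm (row i A2) \<le> norm (row i A)" for i
      using A1(2)[of i] A2(2) A2(4)[of i] by (cases "i = k") auto
    moreover have "pairwise (\<lambda>i j. orthogonal (row i A2) (row j A2)) (insert k S)"
    proof -
      have "row i A2 = row i A1" if "i \<in> S" for i
        using \<open>k \<notin> S\<close> that by (intro A2(4)) blast
      then show ?thesis
        using A1(3) A2(3) by (auto simp: pairwise_insert pairwise_def orthogonal_commute)
    qed
    ultimately show ?case
      using A1(1) A2(1) by auto
  qed
  from this[OF finite_class.finite_UNIV] show ?thesis
    using that by blast
qed

lemma abs_det_eq_prod_norm_rows:
  fixes A :: "real^'n^'n"
  assumes "pairwise (\<lambda>i j. orthogonal (row i A) (row j A)) UNIV"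
  shows "\<bar>det A\<bar> = (\<Prod>i\<in>UNIV. norm (row i A))"
proof -
  have gram: "(A ** transpose A) $ i $ j = row i A \<bullet> row j A" for i j
    by (simp add: matrix_matrix_mult_def transpose_def row_def inner_vec_def)
  have "(det A)\<^sup>2 = det (A ** transpose A)"
    by (simp add: det_mul power2_eq_square)
  also have "\<dots> = (\<Prod>i\<in>UNIV. (norm (row i A))\<^sup>2)"
    using assms by (subst det_diagonal) (auto simp: gram pairwise_def orthogonal_def power2_norm_eq_inner)
  also have "\<dots> = (\<Prod>i\<in>UNIV. norm (row i A))\<^sup>2"
    by (simp add: prod_power_distrib)
  finally have "sqrt ((det A)\<^sup>2) = sqrt ((\<Prod>i\<in>UNIV. norm (row i A))\<^sup>2)"
    by (rule arg_cong)
  then show ?thesis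
    by (simp add: prod_nonneg)
qed

theorem hadamard_inequality:
  fixes A :: "real^'n^'n"
  shows "\<bar>det A\<bar> \<le> (\<Prod>i\<in>UNIV. norm (row i A))"
proof -
  obtain A' where A': "det A' = det A" "\<And>i. norm (row i A') \<le> norm (row i A)"
    "pairwise (\<lambda>i j. orthogonal (row i A') (row j A')) UNIV"
    by (rule orthogonalize_rows[where A = A]) blast
  have "\<bar>det A\<bar> = (\<Prod>i\<in>UNIV. norm (row i A'))"
    using abs_det_eq_prod_norm_rows[OF A'(3)] A'(1) by simp
  also have "\<dots> \<le> (\<Prod>i\<in>UNIV. norm (row i A))"
    using A'(2) by (intro prod_mono) simp
  finally show ?thesis .
qed

text \<open>
  Comparing the volumes of a ball and its image would also give this, but the library's
  \<open>measure_linear_image\<close> is only stated for wellordered index types.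
\<close>

lemma abs_det_mult_power_le:
  fixes M :: "real^'n^'n"
  assumes "r \<ge> 0" and bound: "\<And>u. norm u \<le> r \<Longrightarrow> norm (M *v u) \<le> s"
  shows "\<bar>det M\<bar> * r ^ CARD('n) \<le> s ^ CARD('n)"
proof -
  have column_bound: "r * norm (column j M) \<le> s" for j
  proof -
    have "r * norm (column j M) = norm (M *v (r *\<^sub>R axis j 1))"
      using \<open>r \<ge> 0\<close> by (simp add: matrix_vector_mult_scaleR matrix_vector_mult_basis)
    also have "\<dots> \<le> s"
      using \<open>r \<ge> 0\<close> by (intro bound) simp
    finally show ?thesis .
  qed
  have "\<bar>det M\<bar> * r ^ CARD('n) \<le> (\<Prod>j\<in>UNIV. norm (column j M)) * r ^ CARD('n)"
    using hadamard_inequality[of "transpose M"] \<open>r \<ge> 0\<close> by (intro mult_right_mono) simp_all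
  also have "\<dots> = (\<Prod>j\<in>UNIV. r * norm (column j M))"
    by (simp add: prod.distrib mult.commute)
  also have "\<dots> \<le> (\<Prod>j\<in>(UNIV :: 'n set). s)"
    by (intro prod_mono conjI column_bound) (simp add: \<open>r \<ge> 0\<close>)
  finally show ?thesis
    by simp
qed

definition cvec :: "real^'n \<Rightarrow> complex^'n" where
  "cvec v = (\<chi> i. complex_of_real (v $ i))"

definition Re_vec :: "complex^'n \<Rightarrow> real^'n" where
  "Re_vec z = (\<chi> i. Re (z $ i))"

lemma cmat_mult_cvec: "cmat A *v cvec v = cvec (A *v v)"
  by (simp add: cmat_def cvec_def matrix_vector_mult_def vec_eq_iff)

lemma Re_vec_cmat_mult: "Re_vec (cmat A *v z) = A *v Re_vec z"
  by (simp add: cmat_def Re_vec_def matrix_vector_mult_def vec_eq_iff Re_sum)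

lemma Re_vec_cvec [simp]: "Re_vec (cvec v) = v"
  by (simp add: cvec_def Re_vec_def vec_eq_iff)

lemma Re_vec_add [simp]: "Re_vec (a + b) = Re_vec a + Re_vec b"
  by (simp add: Re_vec_def vec_eq_iff)

lemma norm_Re_vec_le: "norm (Re_vec z) \<le> norm z"
  by (rule norm_le_componentwise_cart) (simp add: Re_vec_def abs_Re_le_cmod)

lemma norm_cvec [simp]: "norm (cvec v) = norm v"
  by (simp add: cvec_def norm_vec_def)

lemma norm_mult_le_if_spectral_norm_le_1:
  assumes "spectral_norm D \<le> 1"
  shows "norm (D *v v) \<le> norm v"
proof -
  have "norm (D *v v) \<le> spectral_norm D * norm v"
    unfolding spectral_norm_def by (rule onorm) simp
  also have "\<dots> \<le> norm v"
    using mult_right_mono[OF assms norm_ge_zero[of v]] by simp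
  finally show ?thesis .
qed

lemma norm_sum_of_real_mult_le:
  fixes w :: "real^'n" and v :: "complex^'n"
  shows "cmod (\<Sum>j\<in>UNIV. complex_of_real (w $ j) * v $ j) \<le> norm w * norm v"
proof -
  let ?a = "\<chi> j. \<bar>w $ j\<bar>" and ?b = "\<chi> j. cmod (v $ j)"
  have "cmod (\<Sum>j\<in>UNIV. complex_of_real (w $ j) * v $ j) \<le> (\<Sum>j\<in>UNIV. \<bar>w $ j\<bar> * cmod (v $ j))"
    by (rule order_trans[OF norm_sum]) (simp add: norm_mult)
  also have "\<dots> = ?a \<bullet> ?b"
    by (simp add: inner_vec_def)
  also have "\<dots> \<le> norm ?a * norm ?b"
    by (rule norm_cauchy_schwarz)
  also have "\<dots> = norm w * norm v"
    by (simp add: norm_vec_def)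
  finally show ?thesis .
qed

text \<open>The rank-one matrix \<open>u w\<^sup>T / \<parallel>w\<parallel>\<^sup>2\<close> is a contraction sending \<open>w\<close> to \<open>u\<close>.\<close>

lemma contraction_matrix_exists:
  fixes w :: "real^'n" and u :: "real^'m"
  assumes "norm u \<le> norm w"
  shows "\<exists>D::complex^'n^'m. spectral_norm D \<le> 1 \<and> D *v cvec w = cvec u"
proof (cases "w = 0")
  case True
  then have "u = 0"
    using assms by simp
  have "(\<lambda>v. (0::complex^'n^'m) *v v) = (\<lambda>v. 0)"
    by (simp add: fun_eq_iff vec_eq_iff matrix_vector_mult_def)
  then have "spectral_norm (0::complex^'n^'m) \<le> 1"
    by (simp add: spectral_norm_def onorm_zero)
  moreover have "(0::complex^'n^'m) *v cvec w = cvec u"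
    using \<open>u = 0\<close> by (simp add: cvec_def vec_eq_iff matrix_vector_mult_def)
  ultimately show ?thesis
    by blast
next
  case False
  define n2 where "n2 = (norm w)\<^sup>2"
  have n2: "n2 > 0"
    using False by (simp add: n2_def)
  define D :: "complex^'n^'m" where "D = (\<chi> i j. complex_of_real (u $ i * w $ j / n2))"
  have D_mult: "(D *v v) $ i = complex_of_real (u $ i / n2) * (\<Sum>j\<in>UNIV. complex_of_real (w $ j) * v $ j)"
    for v i
    by (simp add: D_def matrix_vector_mult_def sum_distrib_left mult.assoc)
  have "(\<Sum>j\<in>UNIV. complex_of_real (w $ j) * complex_of_real (w $ j)) = complex_of_real n2"
    by (simp add: n2_def power2_norm_eq_inner inner_vec_def)
  then have "D *v cvec w = cvec u"
    using n2 by (simp add: vec_eq_iff D_mult cvec_def)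
  moreover have "spectral_norm D \<le> 1"
    unfolding spectral_norm_def
  proof (rule onorm_le)
    fix v :: "complex^'n"
    let ?s = "cmod (\<Sum>j\<in>UNIV. complex_of_real (w $ j) * v $ j)"
    have "norm (D *v v) \<le> norm ((?s / n2) *\<^sub>R u)"
      by (rule norm_le_componentwise_cart)
        (simp add: D_mult norm_mult norm_divide abs_mult n2 less_imp_le mult.commute)
    also have "\<dots> = ?s / n2 * norm u"
      using n2 by simp
    also have "\<dots> \<le> (norm w * norm v) / n2 * norm w"
      using norm_sum_of_real_mult_le[of w v] assms n2 by (intro mult_mono divide_right_mono) auto
    also have "\<dots> = 1 * norm v"
      using n2 False by (simp add: n2_def power2_eq_square)
    finally show "norm (D *v v) \<le> 1 * norm v" .
  qed
  ultimately show ?thesis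
    by blast
qed

lemma inclusion_cvecI:
  assumes "norm u \<le> norm (C *v x)"
  shows "inclusion A B C (cvec x) (cvec (A *v x + B *v u))"
proof -
  obtain D where D: "spectral_norm D \<le> 1" "D *v cvec (C *v x) = cvec u"
    using contraction_matrix_exists[OF assms] by blast
  have "(cmat A + cmat B ** D ** cmat C) *v cvec x = cvec (A *v x + B *v u)"
    by (simp add: matrix_vector_mult_add_rdistrib matrix_vector_mul_assoc[symmetric]
        cmat_mult_cvec D(2)) (simp add: cvec_def vec_eq_iff)
  then show ?thesis
    unfolding inclusion_def using D(1) by metis
qed

lemma inclusion_cvecE:
  assumes "inclusion A B C (cvec x) y"
  obtains z where "norm z \<le> norm (C *v x)" "Re_vec y = A *v x + B *v z"
proof -
  obtain D where D: "spectral_norm D \<le> 1" "y = (cmat A + cmat B ** D ** cmat C) *v cvec x"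
    using assms unfolding inclusion_def by blast
  define z where "z = Re_vec (D *v cvec (C *v x))"
  have "norm z \<le> norm (C *v x)"
    unfolding z_def using norm_Re_vec_le norm_mult_le_if_spectral_norm_le_1[OF D(1)]
    by (metis norm_cvec order_trans)
  moreover have "Re_vec y = A *v x + B *v z"
    by (simp add: D(2) z_def matrix_vector_mult_add_rdistrib matrix_vector_mul_assoc[symmetric]
        cmat_mult_cvec Re_vec_cmat_mult)
  ultimately show ?thesis
    using that by blast
qed

lemma norm_le_of_symmetric_translates:
  fixes c v :: "'a::real_normed_vector"
  assumes "norm (c + v) \<le> s" and "norm (c - v) \<le> s"
  shows "norm v \<le> s"
proof -
  have "2 * norm v = norm ((c + v) - (c - v))"
    by (simp add: scaleR_2[symmetric])
  also have "\<dots> \<le> norm (c + v) + norm (c - v)"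
    by (rule norm_triangle_ineq4)
  finally show ?thesis
    using assms by simp
qed

lemma inclusion_abs_det_mult_power_le:
  fixes Ao Ai :: "real^'nx^'ny" and Bo Bi :: "real^'ny^'ny" and Co Ci :: "real^'nx^'nx"
  assumes "invertible Bo"
    and incl: "\<forall>x y. inclusion Ai Bi Ci x y \<longrightarrow> inclusion Ao Bo Co x y"
  shows "\<bar>det Bi\<bar> * norm (Ci *v x) ^ CARD('ny) \<le> \<bar>det Bo\<bar> * norm (Co *v x) ^ CARD('ny)"
proof -
  obtain Bo' where Bo': "Bo ** Bo' = mat 1" "Bo' ** Bo = mat 1"
    using assms(1) unfolding invertible_def by blast
  define M where "M = Bo' ** Bi"
  define c where "c = Bo' *v ((Ai - Ao) *v x)"
  have affine_bound: "norm (c + M *v u) \<le> norm (Co *v x)" if "norm u \<le> norm (Ci *v x)" for u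
  proof -
    have "inclusion Ao Bo Co (cvec x) (cvec (Ai *v x + Bi *v u))"
      using incl inclusion_cvecI[OF that] by blast
    then obtain z where z: "norm z \<le> norm (Co *v x)" "Ai *v x + Bi *v u = Ao *v x + Bo *v z"
      by (rule inclusion_cvecE) simp
    have "z = Bo' *v (Bo *v z)"
      by (simp add: matrix_vector_mul_assoc Bo'(2))
    also have "Bo *v z = (Ai - Ao) *v x + Bi *v u"
      using z(2) by (simp add: matrix_vector_mult_diff_rdistrib algebra_simps)
    also have "Bo' *v \<dots> = c + M *v u"
      by (simp add: c_def M_def matrix_vector_right_distrib matrix_vector_mul_assoc)
    finally show ?thesis
      using z(1) by simp
  qed
  have "norm (M *v u) \<le> norm (Co *v x)" if "norm u \<le> norm (Ci *v x)" for u
    using affine_bound[of u] affine_bound[of "- u"] that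
    by (simp add: linear_neg[OF matrix_vector_mul_linear] norm_le_of_symmetric_translates[of c])
  then have "\<bar>det M\<bar> * norm (Ci *v x) ^ CARD('ny) \<le> norm (Co *v x) ^ CARD('ny)"
    by (intro abs_det_mult_power_le) simp_all
  moreover have "det Bi = det Bo * det M"
    by (simp add: M_def det_mul[symmetric] matrix_mul_assoc Bo'(1))
  ultimately show ?thesis
    by (simp add: abs_mult mult.assoc mult_left_mono)
qed

lemma det_mult_transpose_powr:
  fixes B :: "real^'n^'n"
  shows "det (B ** transpose B) powr (1 / (2 * real CARD('n))) = \<bar>det B\<bar> powr (1 / real CARD('n))"
proof -
  have "det (B ** transpose B) = \<bar>det B\<bar> powr 2"
    by (simp add: det_mul power2_eq_square)
  also have "\<dots> powr (1 / (2 * real CARD('n))) = \<bar>det B\<bar> powr (1 / real CARD('n))"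
    unfolding powr_powr by simp
  finally show ?thesis .
qed

lemma frob_norm_eq_columns: "frob_norm C = sqrt (\<Sum>j\<in>UNIV. (norm (column j C))\<^sup>2)"
proof -
  have "(norm (column j C))\<^sup>2 = (\<Sum>i\<in>UNIV. (C $ i $ j)\<^sup>2)" for j
    unfolding power2_norm_eq_inner inner_vec_def column_def by (simp add: power2_eq_square)
  then show ?thesis
    unfolding frob_norm_def by (subst sum.swap) simp
qed

lemma cone_width_eq_columns:
  fixes B :: "real^'ny^'ny" and C :: "real^'nx^'nx"
  shows "cone_width B C
    = sqrt (\<Sum>j\<in>UNIV. (\<bar>det B\<bar> powr (1 / real CARD('ny)) * norm (column j C))\<^sup>2)"
proof -
  let ?d = "\<bar>det B\<bar> powr (1 / real CARD('ny))"
  have "sqrt (\<Sum>j\<in>UNIV. (?d * norm (column j C))\<^sup>2)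
      = sqrt (?d\<^sup>2 * (\<Sum>j\<in>UNIV. (norm (column j C))\<^sup>2))"
    by (simp add: power_mult_distrib sum_distrib_left)
  also have "\<dots> = ?d * sqrt (\<Sum>j\<in>UNIV. (norm (column j C))\<^sup>2)"
    by (simp add: real_sqrt_mult)
  also have "\<dots> = cone_width B C"
    by (simp add: cone_width_def det_mult_transpose_powr frob_norm_eq_columns)
  finally show ?thesis ..
qed

lemma root_mult_le_of_mult_power_le:
  fixes a b r s :: real
  assumes "a * r ^ N \<le> b * s ^ N" and "N > 0" and "a \<ge> 0" "b \<ge> 0" "r \<ge> 0" "s \<ge> 0"
  shows "a powr (1 / real N) * r \<le> b powr (1 / real N) * s"
proof -
  have root: "(c * t ^ N) powr (1 / real N) = c powr (1 / real N) * t"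
    if "c \<ge> 0" "t \<ge> 0" for c t :: real
    using that \<open>N > 0\<close>
    by (cases "t = 0") (simp_all add: powr_mult powr_realpow[symmetric] powr_powr)
  have "(a * r ^ N) powr (1 / real N) \<le> (b * s ^ N) powr (1 / real N)"
    using assms by (intro powr_mono2) simp_all
  then show ?thesis
    using assms by (simp add: root)
qed

theorem proposition3:
  fixes Ao Ai :: "real^'nx^'ny" and Bo Bi :: "real^'ny^'ny" and Co Ci :: "real^'nx^'nx"
  assumes "invertible Bo" and "invertible Bi" and "invertible Co" and "invertible Ci"
    and "\<forall>x y. inclusion Ai Bi Ci x y \<longrightarrow> inclusion Ao Bo Co x y"
  shows "cone_width Bo Co \<ge> cone_width Bi Ci"
proof -
  \<comment> \<open>only the invertibility of \<open>Bo\<close> is needed\<close>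
  let ?root = "\<lambda>B. \<bar>det B\<bar> powr (1 / real CARD('ny))"
  have "?root Bi * norm (column j Ci) \<le> ?root Bo * norm (column j Co)" for j
    using inclusion_abs_det_mult_power_le[OF assms(1,5), of "axis j 1"]
    by (intro root_mult_le_of_mult_power_le) (simp_all add: matrix_vector_mult_basis)
  then show ?thesis
    unfolding cone_width_eq_columns
    by (intro real_sqrt_le_mono sum_mono power_mono) simp_all
qed

end
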